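(* Let $N\ge1$, $n\ge0$, and let $Q(\alpha_1,\dots,\alpha_N)=\big(\prod_{j=1}^N\alpha_j\big)\sum_{0\le m\le 3n/4}D_m(\alpha)$, where each $D_m=\sum_{m_1+\dots+m_N=m}c^{(m)}_{m_1\dots m_N}\alpha_1^{2m_1}\cdots\alpha_N^{2m_N}$ has rational coefficients and $c^{(m)}_{m_1\dots m_N}\neq0$ only if $m_j\le n-m$ for every $j$. Suppose $Q$ takes integer values whenever all $\alpha_j$ are odd integers. Then $Q$ can be written uniquely as $$Q(\alpha)=\sum_{k_1,\dots,k_N\ge0}C_{k_1\dots k_N}\prod_{j=1}^NP_{k_j}\Big(\frac{\alpha_j-1}2\Big),\qquad C_{k_1\dots k_N}\in\mathbb Z,$$ and $C_{k_1\dots k_N}\neq0$ implies $\lfloor k_j/2\rfloor\le n-\sum_{i=1}^N\lfloor k_i/2\rfloor$ for every $j$.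
   Context: $P_m(\alpha)=\frac{\alpha(\alpha-1)\cdots(\alpha-m+1)}{m!}$ (with $P_0=1$); $\lfloor\cdot\rfloor$ is the integer part. *)

theory Defs
  imports Complex_Main
begin

text \<open>Variables alpha_1..alpha_N are indexed 0..N-1; exponent vectors (m_1..m_N) and
  index vectors (k_1..k_N) are lists of length N.\<close>

definition Dm :: "nat \<Rightarrow> (nat \<Rightarrow> nat list \<Rightarrow> rat) \<Rightarrow> nat \<Rightarrow> (nat \<Rightarrow> real) \<Rightarrow> real" where
  "Dm N c m \<alpha> = (\<Sum>ms \<in> {ms. length ms = N \<and> sum_list ms = m}.
       of_rat (c m ms) * (\<Prod>j<N. \<alpha> j ^ (2 * (ms ! j))))"

definition Qfun :: "nat \<Rightarrow> nat \<Rightarrow> (nat \<Rightarrow> nat list \<Rightarrow> rat) \<Rightarrow> (nat \<Rightarrow> real) \<Rightarrow> real" where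
  "Qfun N n c \<alpha> = (\<Prod>j<N. \<alpha> j) * (\<Sum>m \<in> {m. 4 * m \<le> 3 * n}. Dm N c m \<alpha>)"

text \<open>P_k(x) = x(x-1)...(x-k+1)/k! is the generalized binomial coefficient x gchoose k.\<close>
definition binom_rep :: "nat \<Rightarrow> (nat list \<Rightarrow> int) \<Rightarrow> (nat \<Rightarrow> real) \<Rightarrow> real" where
  "binom_rep N C \<alpha> = (\<Sum>ks \<in> {ks. C ks \<noteq> 0}.
       of_int (C ks) * (\<Prod>j<N. ((\<alpha> j - 1) / 2) gchoose (ks ! j)))"

definition admissible :: "nat \<Rightarrow> (nat list \<Rightarrow> int) \<Rightarrow> bool" where
  "admissible N C \<longleftrightarrow> finite {ks. C ks \<noteq> 0} \<and> (\<forall>ks. C ks \<noteq> 0 \<longrightarrow> length ks = N)"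

end

theory Submission
  imports Defs "HOL-Library.FuncSet"
begin

(* Substituting alpha_j = 2 y_j + 1, every monomial prod_j alpha_j^(2 m_j + 1) of Q becomes
   prod_j (2 y_j + 1)^(2 m_j + 1), and (2 y + 1)^e is a combination of the binomial polynomials
   y gchoose k with k \<le> e.  Hence Q expands in the products prod_j (y_j gchoose k_j) with
   k_j \<le> 2 m_j + 1, i.e. floor (k_j / 2) \<le> m_j; together with m_j \<le> n - m and sum_j m_j = m this
   is the degree bound.

   Odd integers alpha_j correspond to natural numbers y_j = x_j, where the basis element of k
   takes the value prod_j (x_j choose k_j): it is 1 for k = x and 0 unless k \<le> x componentwise.
   By induction on sum_j k_j, this triangularity shows that a combination with integer values at
   all natural points has integer coefficients, and that a combination vanishing there is zero;
   this gives integrality and uniqueness of the coefficients. *)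

lemma odd_times_gchoose:
  fixes y :: "'a :: field_char_0"
  shows "(2 * y + 1) * (y gchoose k)
    = (2 * of_nat k + 1) * (y gchoose k) + 2 * of_nat (Suc k) * (y gchoose Suc k)"
proof -
  have "(2 * y + 1) * (y gchoose k) = 2 * (y * (y gchoose k)) + (y gchoose k)"
    by (simp add: algebra_simps)
  then show ?thesis
    by (simp only: gbinomial_mult_1) (simp add: algebra_simps)
qed

fun odd_power_coeff :: "nat \<Rightarrow> nat \<Rightarrow> nat" where
  "odd_power_coeff 0 k = (if k = 0 then 1 else 0)"
| "odd_power_coeff (Suc e) 0 = odd_power_coeff e 0"
| "odd_power_coeff (Suc e) (Suc k) =
     (2 * k + 3) * odd_power_coeff e (Suc k) + 2 * (k + 1) * odd_power_coeff e k"

lemma odd_power_coeff_eq_0: "e < k \<Longrightarrow> odd_power_coeff e k = 0"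
  by (induction e k rule: odd_power_coeff.induct) auto

lemma odd_power_gchoose_expansion:
  fixes y :: "'a :: field_char_0"
  shows "(2 * y + 1) ^ e = (\<Sum>k\<le>e. of_nat (odd_power_coeff e k) * (y gchoose k))"
proof (induction e)
  case 0
  show ?case by simp
next
  case (Suc e)
  let ?b = "\<lambda>k. of_nat (odd_power_coeff e k) :: 'a"
  have "(2 * y + 1) ^ Suc e = (\<Sum>k\<le>e. ?b k * ((2 * y + 1) * (y gchoose k)))"
    using Suc by (simp add: sum_distrib_left algebra_simps)
  also have "\<dots> = (\<Sum>k\<le>e. ?b k * (2 * of_nat k + 1) * (y gchoose k))
                 + (\<Sum>k\<le>e. 2 * of_nat (Suc k) * ?b k * (y gchoose Suc k))"
    unfolding sum.distrib[symmetric]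
    by (intro sum.cong refl) (simp only: odd_times_gchoose, simp add: algebra_simps)
  also have "(\<Sum>k\<le>e. ?b k * (2 * of_nat k + 1) * (y gchoose k))
      = (\<Sum>k\<le>Suc e. ?b k * (2 * of_nat k + 1) * (y gchoose k))"
    by (simp add: odd_power_coeff_eq_0)
  also have "\<dots> = ?b 0 + (\<Sum>k\<le>e. ?b (Suc k) * (2 * of_nat k + 3) * (y gchoose Suc k))"
    by (subst sum.atMost_Suc_shift) (simp add: algebra_simps)
  finally show ?case
    by (subst sum.atMost_Suc_shift) (simp add: sum.distrib[symmetric] algebra_simps)
qed

definition binomial_basis :: "nat \<Rightarrow> nat list \<Rightarrow> (nat \<Rightarrow> 'a :: field_char_0) \<Rightarrow> 'a" where
  "binomial_basis N ks y = (\<Prod>j<N. y j gchoose (ks ! j))"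

definition bounded_lists :: "nat \<Rightarrow> nat \<Rightarrow> nat list set" where
  "bounded_lists N L = {ks. set ks \<subseteq> {..L} \<and> length ks = N}"

lemma finite_bounded_lists: "finite (bounded_lists N L)"
  unfolding bounded_lists_def by (rule finite_lists_length_eq) auto

lemma length_bounded_lists: "ks \<in> bounded_lists N L \<Longrightarrow> length ks = N"
  by (simp add: bounded_lists_def)

lemma prod_sum_bounded_lists:
  fixes f :: "nat \<Rightarrow> nat \<Rightarrow> 'a :: comm_semiring_1"
  shows "(\<Prod>j<N. \<Sum>k\<le>L. f j k) = (\<Sum>ks\<in>bounded_lists N L. \<Prod>j<N. f j (ks ! j))"
proof -
  have "(\<Prod>j<N. \<Sum>k\<le>L. f j k) = (\<Sum>g\<in>PiE {..<N} (\<lambda>_. {..L}). \<Prod>j<N. f j (g j))"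
    by (rule prod_sum_PiE) auto
  also have "\<dots> = (\<Sum>ks\<in>bounded_lists N L. \<Prod>j<N. f j (ks ! j))"
  proof (rule sum.reindex_bij_witness
      [where j = "\<lambda>g. map g [0..<N]" and i = "\<lambda>ks. restrict ((!) ks) {..<N}"])
    fix g assume g: "g \<in> PiE {..<N} (\<lambda>_. {..L})"
    then show "restrict ((!) (map g [0..<N])) {..<N} = g"
      by (auto simp: PiE_def extensional_def fun_eq_iff)
    show "map g [0..<N] \<in> bounded_lists N L"
      using g by (auto simp: bounded_lists_def PiE_iff)
    show "(\<Prod>j<N. f j (map g [0..<N] ! j)) = (\<Prod>j<N. f j (g j))"
      by (intro prod.cong) auto
  next
    fix ks assume ks: "ks \<in> bounded_lists N L"
    then show "map (restrict ((!) ks) {..<N}) [0..<N] = ks"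
      by (auto simp: bounded_lists_def intro: nth_equalityI)
    show "restrict ((!) ks) {..<N} \<in> PiE {..<N} (\<lambda>_. {..L})"
      using ks by (auto simp: bounded_lists_def PiE_iff dest: nth_mem)
  qed
  finally show ?thesis .
qed

lemma odd_power_prod_expansion:
  fixes y :: "nat \<Rightarrow> 'a :: field_char_0"
  assumes "\<And>j. j < N \<Longrightarrow> e j \<le> L"
  shows "(\<Prod>j<N. (2 * y j + 1) ^ e j)
    = (\<Sum>ks\<in>bounded_lists N L. of_nat (\<Prod>j<N. odd_power_coeff (e j) (ks ! j)) * binomial_basis N ks y)"
proof -
  have "(2 * y j + 1) ^ e j = (\<Sum>k\<le>L. of_nat (odd_power_coeff (e j) k) * (y j gchoose k))"
    if "j < N" for j
    unfolding odd_power_gchoose_expansion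
    by (rule sum.mono_neutral_left) (use assms that in \<open>auto simp: odd_power_coeff_eq_0\<close>)
  then have "(\<Prod>j<N. (2 * y j + 1) ^ e j)
      = (\<Prod>j<N. \<Sum>k\<le>L. of_nat (odd_power_coeff (e j) k) * (y j gchoose k))"
    by (intro prod.cong) auto
  then show ?thesis
    by (simp add: prod_sum_bounded_lists binomial_basis_def prod.distrib)
qed

lemma binomial_basis_of_nat:
  "binomial_basis N ks (\<lambda>j. of_nat (x ! j)) = (of_nat (\<Prod>j<N. x ! j choose ks ! j) :: 'a :: field_char_0)"
  by (simp add: binomial_basis_def binomial_gbinomial)

lemma sum_list_less_of_nth_le:
  fixes xs ys :: "nat list"
  assumes "length xs = length ys" "\<And>j. j < length xs \<Longrightarrow> xs ! j \<le> ys ! j" "xs \<noteq> ys"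
  shows "sum_list xs < sum_list ys"
proof -
  obtain j where j: "j < length xs" "xs ! j \<noteq> ys ! j"
    using assms nth_equalityI by blast
  have "(\<Sum>i<length xs. xs ! i) < (\<Sum>i<length xs. ys ! i)"
    using assms(2) j by (intro sum_strict_mono_ex1) (auto intro!: bexI[of _ j] simp: order_less_le)
  then show ?thesis
    using assms(1) by (simp add: sum_list_sum_nth atLeast0LessThan)
qed

lemma binomial_basis_coeffs_Ints:
  fixes D :: "nat list \<Rightarrow> 'a :: field_char_0"
  assumes K: "finite K" "\<And>ks. ks \<in> K \<Longrightarrow> length ks = N"
    and at_lattice: "\<And>x. length x = N
      \<Longrightarrow> (\<Sum>ks\<in>K. D ks * binomial_basis N ks (\<lambda>j. of_nat (x ! j))) \<in> \<int>"
  shows "ks \<in> K \<Longrightarrow> D ks \<in> \<int>"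
proof (induction "sum_list ks" arbitrary: ks rule: less_induct)
  case less
  let ?value_at_ks = "\<lambda>k. D k * binomial_basis N k (\<lambda>j. of_nat (ks ! j))"
  have len: "length ks = N"
    using K less by blast
  have other_Ints: "?value_at_ks k \<in> \<int>" if k: "k \<in> K - {ks}" for k
  proof (cases "\<forall>j<N. k ! j \<le> ks ! j")
    case True
    then have "sum_list k < sum_list ks"
      using k K len by (intro sum_list_less_of_nth_le) auto
    then have "D k \<in> \<int>"
      using less k by blast
    then show ?thesis
      unfolding binomial_basis_of_nat by (intro Ints_mult Ints_of_nat)
  next
    case False
    then obtain j where "j < N" "ks ! j < k ! j"
      by auto
    then have vanishes: "(\<Prod>j<N. ks ! j choose k ! j) = 0"
      by auto
    show ?thesis
      unfolding binomial_basis_of_nat vanishes by simp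
  qed
  have "(\<Sum>k\<in>K. ?value_at_ks k) = D ks + (\<Sum>k\<in>K - {ks}. ?value_at_ks k)"
    using less K by (simp add: sum.remove binomial_basis_of_nat)
  moreover have "(\<Sum>k\<in>K - {ks}. ?value_at_ks k) \<in> \<int>"
    using other_Ints by (intro Ints_sum)
  moreover have "(\<Sum>k\<in>K. ?value_at_ks k) \<in> \<int>"
    using at_lattice len by blast
  ultimately show ?case
    by (metis Ints_diff add_diff_cancel_right')
qed

lemma binomial_basis_coeffs_eq_0:
  fixes D :: "nat list \<Rightarrow> 'a :: field_char_0"
  assumes K: "finite K" "\<And>ks. ks \<in> K \<Longrightarrow> length ks = N"
    and at_lattice: "\<And>x. length x = N
      \<Longrightarrow> (\<Sum>ks\<in>K. D ks * binomial_basis N ks (\<lambda>j. of_nat (x ! j))) = 0"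
    and "ks \<in> K"
  shows "D ks = 0"
proof (rule ccontr)
  assume nonzero: "D ks \<noteq> 0"
  \<comment> \<open>Every multiple of D also vanishes on the lattice, hence has integer coefficients.\<close>
  have "D ks / (2 * D ks) \<in> \<int>"
  proof (rule binomial_basis_coeffs_Ints[where D = "\<lambda>k. D k / (2 * D ks)", OF K _ \<open>ks \<in> K\<close>])
    fix x :: "nat list"
    assume "length x = N"
    then show "(\<Sum>k\<in>K. D k / (2 * D ks) * binomial_basis N k (\<lambda>j. of_nat (x ! j))) \<in> \<int>"
      using at_lattice by (simp add: sum_divide_distrib[symmetric])
  qed
  then show False
    using nonzero by simp
qed

definition Q_coeff :: "nat \<Rightarrow> nat \<Rightarrow> (nat \<Rightarrow> nat list \<Rightarrow> rat) \<Rightarrow> nat list \<Rightarrow> real" where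
  "Q_coeff N n c ks = (\<Sum>m\<in>{m. 4 * m \<le> 3 * n}. \<Sum>ms\<in>{ms. length ms = N \<and> sum_list ms = m}.
      of_rat (c m ms) * of_nat (\<Prod>j<N. odd_power_coeff (2 * ms ! j + 1) (ks ! j)))"

lemma Qfun_eq_odd_monomials:
  "Qfun N n c \<alpha> = (\<Sum>m\<in>{m. 4 * m \<le> 3 * n}. \<Sum>ms\<in>{ms. length ms = N \<and> sum_list ms = m}.
      of_rat (c m ms) * (\<Prod>j<N. \<alpha> j ^ (2 * ms ! j + 1)))"
proof -
  have "(\<Prod>j<N. \<alpha> j ^ (2 * ms ! j + 1)) = (\<Prod>j<N. \<alpha> j) * (\<Prod>j<N. \<alpha> j ^ (2 * ms ! j))" for ms
    by (simp add: prod.distrib[symmetric] mult.commute)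
  then show ?thesis
    unfolding Qfun_def Dm_def sum_distrib_left by (simp add: mult.left_commute)
qed

lemma Qfun_binomial_expansion:
  "Qfun N n c \<alpha>
    = (\<Sum>ks\<in>bounded_lists N (2 * n + 1). Q_coeff N n c ks * binomial_basis N ks (\<lambda>j. (\<alpha> j - 1) / 2))"
proof -
  define y where "y = (\<lambda>j. (\<alpha> j - 1) / 2)"
  have odd_y: "2 * y j + 1 = \<alpha> j" for j
    by (simp add: y_def field_simps)
  define M where "M = {m. 4 * m \<le> 3 * n}"
  define Ms where "Ms m = {ms. length ms = N \<and> sum_list ms = m}" for m :: nat
  define K where "K = bounded_lists N (2 * n + 1)"
  let ?coeff = "\<lambda>ms ks. of_nat (\<Prod>j<N. odd_power_coeff (2 * ms ! j + 1) (ks ! j)) :: real"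
  have monomial: "(\<Prod>j<N. \<alpha> j ^ (2 * ms ! j + 1)) = (\<Sum>ks\<in>K. ?coeff ms ks * binomial_basis N ks y)"
    if "m \<in> M" "ms \<in> Ms m" for m ms
  proof -
    have "ms ! j \<le> n" if "j < N" for j
      using elem_le_sum_list[of j ms] \<open>m \<in> M\<close> \<open>ms \<in> Ms m\<close> that by (simp add: M_def Ms_def)
    then have "(\<Prod>j<N. (2 * y j + 1) ^ (2 * ms ! j + 1)) = (\<Sum>ks\<in>K. ?coeff ms ks * binomial_basis N ks y)"
      unfolding K_def by (intro odd_power_prod_expansion) auto
    then show ?thesis
      unfolding odd_y .
  qed
  have "Qfun N n c \<alpha> = (\<Sum>m\<in>M. \<Sum>ms\<in>Ms m. \<Sum>ks\<in>K. of_rat (c m ms) * ?coeff ms ks * binomial_basis N ks y)"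
    unfolding Qfun_eq_odd_monomials M_def[symmetric] Ms_def[symmetric]
    by (intro sum.cong refl) (simp only: monomial sum_distrib_left mult.assoc)
  also have "\<dots> = (\<Sum>ks\<in>K. \<Sum>m\<in>M. \<Sum>ms\<in>Ms m. of_rat (c m ms) * ?coeff ms ks * binomial_basis N ks y)"
    by (simp only: sum.swap[of _ K])
  also have "\<dots> = (\<Sum>ks\<in>K. Q_coeff N n c ks * binomial_basis N ks y)"
    by (simp add: Q_coeff_def M_def Ms_def sum_distrib_right)
  finally show ?thesis
    unfolding K_def y_def .
qed

lemma Q_coeff_Ints:
  assumes odd_Ints: "\<And>a :: nat \<Rightarrow> int. (\<forall>j<N. odd (a j)) \<Longrightarrow> Qfun N n c (\<lambda>j. of_int (a j)) \<in> \<int>"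
    and "ks \<in> bounded_lists N (2 * n + 1)"
  shows "Q_coeff N n c ks \<in> \<int>"
proof (rule binomial_basis_coeffs_Ints[OF finite_bounded_lists length_bounded_lists _ assms(2)])
  fix x :: "nat list"
  define a where "a j = 2 * int (x ! j) + 1" for j
  have "Qfun N n c (\<lambda>j. of_int (a j)) \<in> \<int>"
    by (rule odd_Ints) (simp add: a_def)
  moreover have "(\<lambda>j. (real_of_int (a j) - 1) / 2) = (\<lambda>j. of_nat (x ! j))"
    by (simp add: a_def)
  ultimately show "(\<Sum>ks\<in>bounded_lists N (2 * n + 1).
      Q_coeff N n c ks * binomial_basis N ks (\<lambda>j. of_nat (x ! j))) \<in> \<int>"
    by (simp only: Qfun_binomial_expansion)
qed

lemma Q_coeff_degree_bound:
  assumes support: "\<And>m ms. 4 * m \<le> 3 * n \<Longrightarrow> length ms = N \<Longrightarrow> sum_list ms = m \<Longrightarrow> c m ms \<noteq> 0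
      \<Longrightarrow> \<forall>j<N. ms ! j \<le> n - m"
    and "Q_coeff N n c ks \<noteq> 0" and "j < N"
  shows "int (ks ! j div 2) \<le> int n - (\<Sum>i<N. int (ks ! i div 2))"
proof -
  obtain m where m: "4 * m \<le> 3 * n" and "(\<Sum>ms\<in>{ms. length ms = N \<and> sum_list ms = m}.
      of_rat (c m ms) * of_nat (\<Prod>i<N. odd_power_coeff (2 * ms ! i + 1) (ks ! i)) :: real) \<noteq> 0"
    using sum.not_neutral_contains_not_neutral[OF \<open>Q_coeff N n c ks \<noteq> 0\<close>[unfolded Q_coeff_def]]
    by blast
  from sum.not_neutral_contains_not_neutral[OF this(2)]
  obtain ms where ms: "length ms = N" "sum_list ms = m"
    and nonzero: "of_rat (c m ms) * of_nat (\<Prod>i<N. odd_power_coeff (2 * ms ! i + 1) (ks ! i))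
      \<noteq> (0 :: real)"
    by blast
  have half_le: "ks ! i div 2 \<le> ms ! i" if "i < N" for i
  proof -
    have "odd_power_coeff (2 * ms ! i + 1) (ks ! i) \<noteq> 0"
      using nonzero that by auto
    then have "ks ! i \<le> 2 * ms ! i + 1"
      by (metis odd_power_coeff_eq_0 not_le)
    then show ?thesis
      by linarith
  qed
  have "(\<Sum>i<N. ks ! i div 2) \<le> (\<Sum>i<N. ms ! i)"
    using half_le by (intro sum_mono) auto
  also have "\<dots> = m"
    using ms by (simp add: sum_list_sum_nth atLeast0LessThan)
  finally have "ks ! j div 2 + (\<Sum>i<N. ks ! i div 2) \<le> n"
    using support[OF m ms, rule_format, OF _ \<open>j < N\<close>] nonzero half_le[OF \<open>j < N\<close>] m
    by fastforce
  then show ?thesis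
    unfolding of_nat_sum[symmetric] by linarith
qed

lemma binom_rep_eq_sum:
  assumes "finite K" "{ks. C ks \<noteq> 0} \<subseteq> K"
  shows "binom_rep N C \<alpha> = (\<Sum>ks\<in>K. of_int (C ks) * binomial_basis N ks (\<lambda>j. (\<alpha> j - 1) / 2))"
  unfolding binom_rep_def binomial_basis_def
  by (rule sum.mono_neutral_left) (use assms in auto)

lemma binom_rep_inject:
  assumes C1: "admissible N C1" and C2: "admissible N C2"
    and eq: "\<And>\<alpha>. binom_rep N C1 \<alpha> = binom_rep N C2 \<alpha>"
  shows "C1 = C2"
proof
  fix ks
  define K where "K = {ks. C1 ks \<noteq> 0} \<union> {ks. C2 ks \<noteq> 0}"
  have K: "finite K" "\<And>ks. ks \<in> K \<Longrightarrow> length ks = N"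
    using C1 C2 by (auto simp: K_def admissible_def)
  have "real_of_int (C1 ks) - of_int (C2 ks) = 0" if "ks \<in> K"
  proof (rule binomial_basis_coeffs_eq_0[OF K _ that])
    fix x :: "nat list"
    define \<alpha> where "\<alpha> j = 2 * real (x ! j) + 1" for j
    have "(\<lambda>j. (\<alpha> j - 1) / 2) = (\<lambda>j. of_nat (x ! j))"
      by (simp add: \<alpha>_def)
    then show "(\<Sum>k\<in>K. (real_of_int (C1 k) - of_int (C2 k))
        * binomial_basis N k (\<lambda>j. of_nat (x ! j))) = 0"
      using eq[of \<alpha>] binom_rep_eq_sum[OF K(1), of C1 N \<alpha>] binom_rep_eq_sum[OF K(1), of C2 N \<alpha>]
      by (simp add: K_def sum_subtractf left_diff_distrib)
  qed
  then show "C1 ks = C2 ks"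
    by (cases "ks \<in> K") (auto simp: K_def)
qed

lemma Qfun_eq_binom_rep:
  assumes "\<And>a :: nat \<Rightarrow> int. (\<forall>j<N. odd (a j)) \<Longrightarrow> Qfun N n c (\<lambda>j. of_int (a j)) \<in> \<int>"
  obtains C where "admissible N C" "\<And>\<alpha>. Qfun N n c \<alpha> = binom_rep N C \<alpha>"
    and "\<And>ks. C ks \<noteq> 0 \<Longrightarrow> Q_coeff N n c ks \<noteq> 0"
proof
  define K where "K = bounded_lists N (2 * n + 1)"
  define C where "C ks = (if ks \<in> K then \<lfloor>Q_coeff N n c ks\<rfloor> else 0)" for ks
  have C_eq: "real_of_int (C ks) = (if ks \<in> K then Q_coeff N n c ks else 0)" for ks
    using Q_coeff_Ints[OF assms] by (simp add: C_def K_def)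
  have support: "{ks. C ks \<noteq> 0} \<subseteq> K"
    by (auto simp: C_def)
  show "admissible N C"
    using support finite_bounded_lists length_bounded_lists
    unfolding admissible_def K_def by (blast intro: finite_subset)
  show "Qfun N n c \<alpha> = binom_rep N C \<alpha>" for \<alpha>
    unfolding Qfun_binomial_expansion
      binom_rep_eq_sum[OF finite_bounded_lists support[unfolded K_def]]
    by (intro sum.cong refl) (simp add: C_eq K_def)
  show "Q_coeff N n c ks \<noteq> 0" if "C ks \<noteq> 0" for ks
    using that C_eq[of ks] by (auto split: if_splits)
qed

theorem mainTheorem2:
  fixes N n :: nat and c :: "nat \<Rightarrow> nat list \<Rightarrow> rat"
  assumes "N \<ge> 1"
    and "\<And>m ms. 4 * m \<le> 3 * n \<Longrightarrow> length ms = N \<Longrightarrow> sum_list ms = m \<Longrightarrow> c m ms \<noteq> 0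
            \<Longrightarrow> \<forall>j<N. ms ! j \<le> n - m"
    and "\<And>a :: nat \<Rightarrow> int. (\<forall>j<N. odd (a j)) \<Longrightarrow> Qfun N n c (\<lambda>j. of_int (a j)) \<in> \<int>"
  shows "(\<exists>!C. admissible N C \<and> (\<forall>\<alpha>. Qfun N n c \<alpha> = binom_rep N C \<alpha>))
    \<and> (\<forall>C. admissible N C \<and> (\<forall>\<alpha>. Qfun N n c \<alpha> = binom_rep N C \<alpha>) \<longrightarrow>
          (\<forall>ks. C ks \<noteq> 0 \<longrightarrow>
             (\<forall>j<N. int ((ks ! j) div 2) \<le> int n - (\<Sum>i<N. int ((ks ! i) div 2)))))"
proof -
  obtain C where adm: "admissible N C" and rep: "\<And>\<alpha>. Qfun N n c \<alpha> = binom_rep N C \<alpha>"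
    and support: "\<And>ks. C ks \<noteq> 0 \<Longrightarrow> Q_coeff N n c ks \<noteq> 0"
    using Qfun_eq_binom_rep[OF assms(3)] by blast
  have unique: "C' = C"
    if "admissible N C' \<and> (\<forall>\<alpha>. Qfun N n c \<alpha> = binom_rep N C' \<alpha>)" for C'
  proof (rule binom_rep_inject[OF _ adm])
    show "admissible N C'"
      using that by blast
    show "binom_rep N C' \<alpha> = binom_rep N C \<alpha>" for \<alpha>
      using that rep[of \<alpha>] by simp
  qed
  show ?thesis
  proof (intro conjI allI impI)
    show "\<exists>!C. admissible N C \<and> (\<forall>\<alpha>. Qfun N n c \<alpha> = binom_rep N C \<alpha>)"
    proof (rule ex1I[of _ C])
      show "admissible N C \<and> (\<forall>\<alpha>. Qfun N n c \<alpha> = binom_rep N C \<alpha>)"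
        using adm rep by blast
    qed (rule unique)
  next
    fix C' ks j
    assume rep': "admissible N C' \<and> (\<forall>\<alpha>. Qfun N n c \<alpha> = binom_rep N C' \<alpha>)"
      and "C' ks \<noteq> 0" and "j < N"
    then have "Q_coeff N n c ks \<noteq> 0"
      using support unique[OF rep'] by simp
    then show "int (ks ! j div 2) \<le> int n - (\<Sum>i<N. int (ks ! i div 2))"
      using Q_coeff_degree_bound[OF assms(2) _ \<open>j < N\<close>] by blast
  qed
qed

end
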